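(* Let $\mathbf{u}=(u_n)$ be an a-sequence. Then $\{x\in\mathbb{T}: \mathrm{supp}_\mathbf{u}(x)\text{ is finite}\}=t(s_\mathbf{u}(\mathbb{T}))$, the torsion subgroup of $s_\mathbf{u}(\mathbb{T})$.
   Context: An a-sequence is a strictly increasing sequence of integers $\mathbf{u}=(u_n)_{n\in\mathbb{N}}$ with $u_n\mid u_{n+1}$ for all $n$; ratios $q_0=u_0$, $q_n=u_n/u_{n-1}$. $\mathbb{T}=\mathbb{R}/\mathbb{Z}$, and each $x\in\mathbb{T}$ is identified with its representative in $[0,1)$. $s_\mathbf{u}(\mathbb{T})=\{x\in\mathbb{T}: u_nx\to0\text{ in }\mathbb{T}\}$. Canonical representation: for $x\in[0,1)$ there is a unique integer sequence $(c_n)_{n\ge1}$ with $0\le c_n<q_n$ for all $n$, $c_n<q_n-1$ for infinitely many $n$, and $x=\sum_{n\ge1}c_n/u_n$. Then $\mathrm{supp}_\mathbf{u}(x)=\{n: c_n\ne0\}$. *)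

theory Defs
  imports "HOL-Analysis.Analysis"
begin

definition a_sequence :: "(nat \<Rightarrow> int) \<Rightarrow> bool" where
  "a_sequence u \<longleftrightarrow> strict_mono u \<and> (\<forall>n. u n dvd u (Suc n))"

definition ratio :: "(nat \<Rightarrow> int) \<Rightarrow> nat \<Rightarrow> int" where
  "ratio u n = (if n = 0 then u 0 else u n div u (n - 1))"

text \<open>Distance to the nearest integer: the norm of the class of x in T = R/Z.\<close>
definition tnorm :: "real \<Rightarrow> real" where
  "tnorm x = \<bar>x - of_int (round x)\<bar>"

text \<open>s_u(T), with elements of T identified with representatives in [0,1).\<close>
definition s_u :: "(nat \<Rightarrow> int) \<Rightarrow> real set" where
  "s_u u = {x. 0 \<le> x \<and> x < 1 \<and> (\<lambda>n. tnorm (of_int (u n) * x)) \<longlonglongrightarrow> 0}"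

definition torsion_part :: "real set \<Rightarrow> real set" where
  "torsion_part S = {x \<in> S. \<exists>m::nat. m > 0 \<and> of_nat m * x \<in> \<int>}"

text \<open>Canonical representation (digits c n for n \<ge> 1; c 0 normalised to 0).\<close>
definition canonical_rep :: "(nat \<Rightarrow> int) \<Rightarrow> real \<Rightarrow> (nat \<Rightarrow> int) \<Rightarrow> bool" where
  "canonical_rep u x c \<longleftrightarrow> c 0 = 0 \<and>
     (\<forall>n\<ge>1. 0 \<le> c n \<and> c n < ratio u n) \<and>
     infinite {n. n \<ge> 1 \<and> c n < ratio u n - 1} \<and>
     (\<lambda>n. of_int (c (Suc n)) / of_int (u (Suc n))) sums x"

definition supp_u :: "(nat \<Rightarrow> int) \<Rightarrow> real \<Rightarrow> nat set" where
  "supp_u u x = {n. n \<ge> 1 \<and> (THE c. canonical_rep u x c) n \<noteq> 0}"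

end

theory Submission
  imports Defs
begin

text \<open>The canonical digits of \<open>x \<in> [0,1)\<close> are the greedy ones,
  \<open>c n = \<lfloor>u n x\<rfloor> - q n \<lfloor>u (n - 1) x\<rfloor>\<close>: their partial sums are \<open>\<lfloor>u n x\<rfloor> / u n\<close>, and
  the strict inequality \<open>x < (\<lfloor>u n x\<rfloor> + 1) / u n\<close> is what forces infinitely many non-maximal
  digits. Hence the support is finite iff \<open>\<lfloor>u n x\<rfloor> / u n\<close> is eventually constant, i.e. iff
  \<open>u N x \<in> \<int>\<close> for some \<open>N\<close>. The same condition characterises the torsion of \<open>s_u u\<close>:
  it clearly suffices, and conversely if \<open>m x \<in> \<int>\<close> then \<open>m\<close> times the distance from \<open>u N x\<close> to
  \<open>\<int>\<close> is the distance between two integers, so it vanishes once that distance is below \<open>1/m\<close>.\<close>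

lemma tnorm_Ints: "y \<in> \<int> \<Longrightarrow> tnorm y = 0"
  by (auto simp: tnorm_def elim: Ints_cases)

lemma Ints_if_tnorm_less:
  assumes "m > 0" "of_nat m * y \<in> \<int>" "tnorm y < 1 / real m"
  shows "y \<in> \<int>"
proof -
  obtain a where a: "of_nat m * y = of_int a" using assms(2) Ints_cases by metis
  define R where "R = round y"
  have md: "real m * (y - of_int R) = of_int (a - int m * R)"
    using a by (simp add: algebra_simps)
  have "real m * \<bar>y - of_int R\<bar> < 1"
    using assms(1,3) unfolding tnorm_def R_def[symmetric] by (simp add: field_simps)
  then have "\<bar>real m * (y - of_int R)\<bar> < 1" by (simp add: abs_mult)
  then have "\<bar>a - int m * R\<bar> < 1" unfolding md by linarith
  then have "real m * (y - of_int R) = 0" unfolding md by simp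
  then show ?thesis using assms(1) by simp
qed

locale normalized_a_sequence =
  fixes u :: "nat \<Rightarrow> int"
  assumes a_sequence: "a_sequence u" and u_0: "u 0 = 1"
begin

lemma u_less_Suc: "u n < u (Suc n)"
  using a_sequence unfolding a_sequence_def strict_mono_def by simp

lemma u_ge: "u n \<ge> int n + 1"
proof (induction n)
  case (Suc n)
  then show ?case using u_less_Suc[of n] by simp
qed (simp add: u_0)

lemma u_pos: "u n > 0"
  using u_ge[of n] by simp

lemma u_Suc: "u (Suc n) = ratio u (Suc n) * u n"
  using a_sequence unfolding a_sequence_def ratio_def by simp

lemma ratio_ge_2: "ratio u (Suc n) \<ge> 2"
proof -
  have "1 * u n < ratio u (Suc n) * u n" using u_Suc u_less_Suc by simp
  then show ?thesis using u_pos[of n] mult_less_cancel_right by fastforce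
qed

lemma u_dvd: "N \<le> n \<Longrightarrow> u N dvd u n"
  by (induction n rule: dec_induct) (auto simp: u_Suc)

lemma inverse_u_LIMSEQ: "(\<lambda>n. 1 / real_of_int (u n)) \<longlonglongrightarrow> 0"
proof (rule tendsto_sandwich[of "\<lambda>n. 0" _ _ "\<lambda>n. 1 / (real n + 1)"])
  have "real n + 1 \<le> of_int (u n)" for n
    using u_ge[of n] by linarith
  then show "\<forall>\<^sub>F n in sequentially. 1 / real_of_int (u n) \<le> 1 / (real n + 1)"
    using u_pos by (intro always_eventually allI divide_left_mono) (auto intro!: mult_pos_pos)
  show "(\<lambda>n. 1 / (real n + 1)) \<longlonglongrightarrow> 0"
    using LIMSEQ_inverse_real_of_nat by (simp add: inverse_eq_divide add.commute)
qed (auto simp: less_imp_le u_pos)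

lemma mult_u_Ints_mono:
  assumes "N \<le> n" "of_int (u N) * x \<in> \<int>"
  shows "of_int (u n) * x \<in> \<int>"
proof -
  obtain d where "u n = u N * d" using u_dvd[OF assms(1)] by blast
  then have "of_int (u n) * x = of_int d * (of_int (u N) * x)" by (simp add: mult_ac)
  then show ?thesis using assms(2) by simp
qed

lemma quotient_u_const:
  assumes "\<And>m. N \<le> m \<Longrightarrow> a (Suc m) = ratio u (Suc m) * a m" "N \<le> m"
  shows "real_of_int (a m) / of_int (u m) = of_int (a N) / of_int (u N)"
  using assms(2)
proof (induction m rule: dec_induct)
  case (step m)
  have "ratio u (Suc m) \<noteq> 0" using ratio_ge_2[of m] by simp
  then show ?case using step by (simp add: assms(1) u_Suc)
qed simp

lemma quotient_u_eq_limit: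
  assumes "\<And>m. N \<le> m \<Longrightarrow> a (Suc m) = ratio u (Suc m) * a m"
    and "(\<lambda>m. real_of_int (a m) / of_int (u m)) \<longlonglongrightarrow> x"
  shows "real_of_int (a N) / of_int (u N) = x"
proof -
  have "(\<lambda>m. real_of_int (a (m + N)) / of_int (u (m + N))) = (\<lambda>m. of_int (a N) / of_int (u N))"
    using assms(1) by (intro ext quotient_u_const) auto
  moreover have "(\<lambda>m. real_of_int (a (m + N)) / of_int (u (m + N))) \<longlonglongrightarrow> x"
    using LIMSEQ_ignore_initial_segment[OF assms(2)] .
  ultimately show ?thesis by (metis LIMSEQ_const_iff)
qed

definition digit_sum :: "(nat \<Rightarrow> int) \<Rightarrow> nat \<Rightarrow> real" where
  "digit_sum c n = (\<Sum>k<n. of_int (c (Suc k)) / of_int (u (Suc k)))"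

primrec digit_numerator :: "(nat \<Rightarrow> int) \<Rightarrow> nat \<Rightarrow> int" where
  "digit_numerator c 0 = 0"
| "digit_numerator c (Suc n) = ratio u (Suc n) * digit_numerator c n + c (Suc n)"

definition floor_u :: "real \<Rightarrow> nat \<Rightarrow> int" where
  "floor_u x n = \<lfloor>of_int (u n) * x\<rfloor>"

definition greedy_digit :: "real \<Rightarrow> nat \<Rightarrow> int" where
  "greedy_digit x n = (if n = 0 then 0 else floor_u x n - ratio u n * floor_u x (n - 1))"

lemma digit_sum_Suc:
  "digit_sum c (Suc n) = digit_sum c n + of_int (c (Suc n)) / of_int (u (Suc n))"
  by (simp add: digit_sum_def)

lemma digit_sum_eq: "digit_sum c n = of_int (digit_numerator c n) / of_int (u n)"
proof (induction n)
  case (Suc n)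
  have "ratio u (Suc n) \<noteq> 0" "u n \<noteq> 0" using ratio_ge_2[of n] u_pos[of n] by auto
  then show ?case using Suc by (simp add: digit_sum_Suc u_Suc field_simps)
qed (simp add: digit_sum_def)

lemma floor_u_quotient_bounds:
  "0 \<le> x - of_int (floor_u x n) / of_int (u n)"
  "x - of_int (floor_u x n) / of_int (u n) < 1 / of_int (u n)"
proof -
  have un: "real_of_int (u n) > 0" using u_pos by simp
  have "x - of_int (floor_u x n) / of_int (u n) = (of_int (u n) * x - of_int (floor_u x n)) / of_int (u n)"
    using un by (simp add: field_simps)
  moreover have "0 \<le> of_int (u n) * x - of_int (floor_u x n)" "of_int (u n) * x - of_int (floor_u x n) < 1"
    unfolding floor_u_def by linarith+
  ultimately show "0 \<le> x - of_int (floor_u x n) / of_int (u n)"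
    "x - of_int (floor_u x n) / of_int (u n) < 1 / of_int (u n)"
    using un by (auto intro: divide_strict_right_mono)
qed

lemma floor_u_quotient_LIMSEQ: "(\<lambda>n. of_int (floor_u x n) / of_int (u n)) \<longlonglongrightarrow> x"
proof (rule tendsto_sandwich[of "\<lambda>n. x - 1 / of_int (u n)" _ _ "\<lambda>n. x"])
  show "(\<lambda>n. x - 1 / real_of_int (u n)) \<longlonglongrightarrow> x"
    using tendsto_diff[OF tendsto_const inverse_u_LIMSEQ, of x] by simp
qed (use floor_u_quotient_bounds in \<open>auto intro!: always_eventually less_imp_le simp: algebra_simps\<close>)

lemma floor_u_Suc_bounds:
  "ratio u (Suc n) * floor_u x n \<le> floor_u x (Suc n)"
  "floor_u x (Suc n) \<le> ratio u (Suc n) * floor_u x n + ratio u (Suc n) - 1"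
proof -
  define q where "q = ratio u (Suc n)"
  have q: "real_of_int q > 0" using ratio_ge_2[of n] by (simp add: q_def)
  have e: "of_int (u (Suc n)) * x = of_int q * (of_int (u n) * x)"
    by (simp add: u_Suc q_def)
  have "of_int (floor_u x n) \<le> of_int (u n) * x" "of_int (u n) * x < of_int (floor_u x n) + 1"
    unfolding floor_u_def by linarith+
  then have "of_int q * of_int (floor_u x n) \<le> of_int q * (of_int (u n) * x)"
    "of_int q * (of_int (u n) * x) < of_int q * (of_int (floor_u x n) + 1)"
    using q by (simp_all add: mult_left_mono)
  then have "of_int (q * floor_u x n) \<le> of_int (u (Suc n)) * x"
    "of_int (u (Suc n)) * x < of_int (q * floor_u x n + q)"
    unfolding e by (simp_all add: algebra_simps)
  then show "q * floor_u x n \<le> floor_u x (Suc n)" "floor_u x (Suc n) \<le> q * floor_u x n + q - 1"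
    by (simp_all add: floor_u_def le_floor_iff floor_less_iff)
qed

lemma digit_numerator_greedy:
  "0 \<le> x \<Longrightarrow> x < 1 \<Longrightarrow> digit_numerator (greedy_digit x) n = floor_u x n"
  by (induction n) (simp_all add: greedy_digit_def floor_u_def u_0 floor_eq_iff)

lemma greedy_canonical:
  assumes "0 \<le> x" "x < 1"
  shows "canonical_rep u x (greedy_digit x)"
  unfolding canonical_rep_def
proof (intro conjI allI impI)
  fix n :: nat assume "n \<ge> 1"
  then obtain m where m: "n = Suc m" by (cases n) auto
  show "0 \<le> greedy_digit x n" "greedy_digit x n < ratio u n"
    using floor_u_Suc_bounds[where n=m and x=x] unfolding m greedy_digit_def by simp_all
next
  show "(\<lambda>n. of_int (greedy_digit x (Suc n)) / of_int (u (Suc n))) sums x"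
    using floor_u_quotient_LIMSEQ[of x]
    by (simp add: sums_def digit_sum_def[symmetric] digit_sum_eq digit_numerator_greedy assms)
next
  show "infinite {n. n \<ge> 1 \<and> greedy_digit x n < ratio u n - 1}"
  proof
    assume "finite {n. n \<ge> 1 \<and> greedy_digit x n < ratio u n - 1}"
    then obtain N where N: "\<And>n. n \<ge> 1 \<Longrightarrow> greedy_digit x n < ratio u n - 1 \<Longrightarrow> n \<le> N"
      unfolding finite_nat_set_iff_bounded_le by blast
    define a where "a n = floor_u x n + 1" for n
    \<comment> \<open>maximal digits from \<open>N\<close> on would make \<open>x\<close> equal to the upper end \<open>a N / u N\<close>\<close>
    have "a (Suc m) = ratio u (Suc m) * a m" if "N \<le> m" for m
      using N[of "Suc m"] that floor_u_Suc_bounds(2)[where n=m and x=x]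
      by (force simp: a_def greedy_digit_def algebra_simps)
    moreover have "(\<lambda>m. real_of_int (a m) / of_int (u m)) \<longlonglongrightarrow> x"
      using tendsto_add[OF floor_u_quotient_LIMSEQ inverse_u_LIMSEQ]
      by (simp add: a_def add_divide_distrib)
    ultimately have "of_int (a N) / of_int (u N) = x" by (rule quotient_u_eq_limit)
    moreover have "x < of_int (a N) / of_int (u N)"
      using floor_u_quotient_bounds(2)[of x N] by (simp add: a_def add_divide_distrib)
    ultimately show False by simp
  qed
qed (simp add: greedy_digit_def)

lemma digit_term_le:
  assumes "c (Suc m) \<le> ratio u (Suc m) - d"
  shows "real_of_int (c (Suc m)) / of_int (u (Suc m))
    \<le> 1 / of_int (u m) - of_int d / of_int (u (Suc m))"
proof -
  have "real_of_int (c (Suc m)) / of_int (u (Suc m)) \<le> of_int (ratio u (Suc m) - d) / of_int (u (Suc m))"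
    using assms u_pos[of "Suc m"] by (intro divide_right_mono) auto
  also have "\<dots> = 1 / of_int (u m) - of_int d / of_int (u (Suc m))"
    using u_pos[of m] ratio_ge_2[of m] by (simp add: u_Suc field_simps)
  finally show ?thesis .
qed

lemma digit_sum_diff_le:
  assumes "\<And>j. j \<ge> 1 \<Longrightarrow> c j < ratio u j" "n \<le> m"
  shows "digit_sum c m - digit_sum c n \<le> 1 / of_int (u n) - 1 / of_int (u m)"
  using assms(2)
proof (induction m rule: dec_induct)
  case (step m)
  then show ?case
    using digit_term_le[of c m 1] assms(1)[of "Suc m"] by (simp add: digit_sum_Suc)
qed simp

lemma digit_sum_diff_less:
  assumes digits: "\<And>j. j \<ge> 1 \<Longrightarrow> c j < ratio u j"
    and "n < k" "k \<le> m" "c k < ratio u k - 1"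
  shows "digit_sum c m - digit_sum c n \<le> 1 / of_int (u n) - 1 / of_int (u m) - 1 / of_int (u k)"
proof -
  obtain j where k: "k = Suc j" using assms(2) by (cases k) auto
  have "digit_sum c m - digit_sum c n = (digit_sum c j - digit_sum c n)
      + of_int (c k) / of_int (u k) + (digit_sum c m - digit_sum c k)"
    by (simp add: k digit_sum_Suc)
  moreover have "real_of_int (c k) / of_int (u k) \<le> 1 / of_int (u j) - 2 / of_int (u k)"
    using digit_term_le[of c j 2] assms(4) by (simp add: k)
  ultimately show ?thesis
    using digit_sum_diff_le[OF digits, of n j] digit_sum_diff_le[OF digits, of k m] assms(2,3) k
    by simp
qed

lemma canonical_digit_sum_bounds:
  assumes c: "canonical_rep u x c"
  shows "digit_sum c n \<le> x" "x < digit_sum c n + 1 / of_int (u n)"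
proof -
  have lim: "digit_sum c \<longlonglongrightarrow> x" and digits: "\<And>j. j \<ge> 1 \<Longrightarrow> 0 \<le> c j \<and> c j < ratio u j"
    using c by (simp_all add: canonical_rep_def sums_def digit_sum_def[abs_def])
  have "incseq (digit_sum c)"
    using digits u_pos by (intro incseq_SucI) (auto simp: digit_sum_Suc intro!: divide_nonneg_pos)
  then show "digit_sum c n \<le> x" using lim by (rule incseq_le)
  obtain k where k: "n < k" "c k < ratio u k - 1"
    using c unfolding canonical_rep_def infinite_nat_iff_unbounded by blast
  have "x - digit_sum c n \<le> 1 / of_int (u n) - 1 / of_int (u k)"
  proof (rule LIMSEQ_le_const2)
    show "(\<lambda>m. digit_sum c m - digit_sum c n) \<longlonglongrightarrow> x - digit_sum c n"
      using lim by (intro tendsto_intros)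
    show "\<exists>N. \<forall>m\<ge>N. digit_sum c m - digit_sum c n \<le> 1 / of_int (u n) - 1 / of_int (u k)"
    proof (intro exI[of _ k] allI impI)
      fix m assume "k \<le> m"
      then have "digit_sum c m - digit_sum c n
          \<le> 1 / of_int (u n) - 1 / of_int (u m) - 1 / of_int (u k)"
        using digit_sum_diff_less[of c n k m] digits k by blast
      moreover have "0 < 1 / real_of_int (u m)" using u_pos[of m] by simp
      ultimately show "digit_sum c m - digit_sum c n \<le> 1 / of_int (u n) - 1 / of_int (u k)"
        by linarith
    qed
  qed
  moreover have "0 < 1 / real_of_int (u k)" using u_pos[of k] by simp
  ultimately show "x < digit_sum c n + 1 / of_int (u n)" by linarith
qed

lemma canonical_rep_eq_greedy:
  assumes c: "canonical_rep u x c"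
  shows "c = greedy_digit x"
proof
  have numerator: "digit_numerator c n = floor_u x n" for n
  proof -
    have "real_of_int (u n) > 0" using u_pos by simp
    then show ?thesis
      using canonical_digit_sum_bounds[OF c, of n] unfolding digit_sum_eq floor_u_def
      by (intro floor_unique[symmetric]) (simp_all add: field_simps)
  qed
  fix n show "c n = greedy_digit x n"
  proof (cases n)
    case 0 then show ?thesis using c by (simp add: canonical_rep_def greedy_digit_def)
  next
    case (Suc m)
    then show ?thesis by (simp add: greedy_digit_def numerator[symmetric])
  qed
qed

lemma supp_u_eq:
  "0 \<le> x \<Longrightarrow> x < 1 \<Longrightarrow> supp_u u x = {n. n \<ge> 1 \<and> greedy_digit x n \<noteq> 0}"
  unfolding supp_u_def
  using the_equality[of "canonical_rep u x", OF greedy_canonical canonical_rep_eq_greedy] by simp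

lemma finite_supp_u_iff:
  assumes "0 \<le> x" "x < 1"
  shows "finite (supp_u u x) \<longleftrightarrow> (\<exists>N. of_int (u N) * x \<in> \<int>)"
proof
  assume "finite (supp_u u x)"
  then obtain N where N: "\<And>n. n \<ge> 1 \<Longrightarrow> greedy_digit x n \<noteq> 0 \<Longrightarrow> n \<le> N"
    unfolding supp_u_eq[OF assms] finite_nat_set_iff_bounded_le by blast
  have "floor_u x (Suc m) = ratio u (Suc m) * floor_u x m" if "N \<le> m" for m
    using N[of "Suc m"] that by (force simp: greedy_digit_def)
  then have "of_int (floor_u x N) / of_int (u N) = x"
    using floor_u_quotient_LIMSEQ by (rule quotient_u_eq_limit)
  then have "of_int (u N) * x = of_int (floor_u x N)"
    using u_pos[of N] by (auto simp: field_simps)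
  then show "\<exists>N. of_int (u N) * x \<in> \<int>" by (metis Ints_of_int)
next
  assume "\<exists>N. of_int (u N) * x \<in> \<int>"
  then obtain N where N: "of_int (u N) * x \<in> \<int>" by blast
  have floor_eq: "of_int (floor_u x n) = of_int (u n) * x" if "N \<le> n" for n
    using mult_u_Ints_mono[OF that N] by (auto simp: floor_u_def elim: Ints_cases)
  have vanish: "greedy_digit x (Suc n) = 0" if "N \<le> n" for n
  proof -
    have "real_of_int (floor_u x (Suc n)) = of_int (ratio u (Suc n) * floor_u x n)"
      using floor_eq[of n] floor_eq[of "Suc n"] that by (simp add: u_Suc)
    then show ?thesis unfolding greedy_digit_def of_int_eq_iff by simp
  qed
  have "supp_u u x \<subseteq> {..N}"
  proof
    fix n assume "n \<in> supp_u u x"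
    then have "n \<ge> 1" "greedy_digit x n \<noteq> 0" using supp_u_eq[OF assms] by auto
    then show "n \<in> {..N}" using vanish[of "n - 1"] by (cases "N \<le> n - 1") auto
  qed
  then show "finite (supp_u u x)" by (rule finite_subset) simp
qed

lemma torsion_part_s_u_iff:
  "x \<in> torsion_part (s_u u) \<longleftrightarrow> 0 \<le> x \<and> x < 1 \<and> (\<exists>N. of_int (u N) * x \<in> \<int>)"
proof
  assume "x \<in> torsion_part (s_u u)"
  then obtain m :: nat where m: "m > 0" "of_nat m * x \<in> \<int>" and
    x: "0 \<le> x" "x < 1" and lim: "(\<lambda>n. tnorm (of_int (u n) * x)) \<longlonglongrightarrow> 0"
    unfolding torsion_part_def s_u_def by auto
  obtain N where "tnorm (of_int (u N) * x) < 1 / real m"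
    using order_tendstoD(2)[OF lim, of "1 / real m"] m(1) by (auto simp: eventually_sequentially)
  moreover have "of_nat m * (of_int (u N) * x) \<in> \<int>"
    using m(2) by (metis Ints_mult Ints_of_int mult.left_commute)
  ultimately show "0 \<le> x \<and> x < 1 \<and> (\<exists>N. of_int (u N) * x \<in> \<int>)"
    using Ints_if_tnorm_less m(1) x by blast
next
  assume "0 \<le> x \<and> x < 1 \<and> (\<exists>N. of_int (u N) * x \<in> \<int>)"
  then obtain N where x: "0 \<le> x" "x < 1" and N: "of_int (u N) * x \<in> \<int>" by blast
  have "\<forall>\<^sub>F n in sequentially. tnorm (of_int (u n) * x) = 0"
    using mult_u_Ints_mono[OF _ N] tnorm_Ints by (auto simp: eventually_sequentially)
  then have "x \<in> s_u u" using x by (simp add: s_u_def tendsto_eventually)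
  moreover have "of_nat (nat (u N)) * x \<in> \<int>" "nat (u N) > 0"
    using N u_pos[of N] by simp_all
  ultimately show "x \<in> torsion_part (s_u u)" unfolding torsion_part_def by blast
qed

end

theorem mainTheorem7:
  fixes u :: "nat \<Rightarrow> int"
  assumes "a_sequence u" and "u 0 = 1"
  shows "{x::real. 0 \<le> x \<and> x < 1 \<and> finite (supp_u u x)} = torsion_part (s_u u)"
proof -
  interpret normalized_a_sequence u using assms by unfold_locales
  show ?thesis using finite_supp_u_iff torsion_part_s_u_iff by blast
qed

end
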